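(* Let $(X,d)$ be a bicomplete quasi-pseudometric space. Let $J:X\to X$ be a continuous single-valued map such that $r\,d(x,y)\le d(Jx,Jy)$ for all $x,y\in X$, for some constant $r>0$. Let $F:X\to CB(X)$ be a set-valued map such that $$H(Fx,Fy)\le \alpha\big[d(Jx,Fy)+d(Fx,Jy)\big]\quad\text{for all }x,y\in X,$$ where $0<\alpha<1/2$ and $2r\alpha<1$. Then there exists a unique $x_0\in X$ which is both a startpoint and an endpoint of $J$ and $F$ if and only if $J$ and $F$ have the approximate mix-point property.
   Context: A quasi-pseudometric on a nonempty set $X$ is a map $d:X\times X\to[0,\infty)$ with $d(x,x)=0$ and $d(x,z)\le d(x,y)+d(y,z)$ for all $x,y,z$; it is $T_0$ if $d(x,y)=0=d(y,x)$ implies $x=y$. Write $d^s(x,y)=\max\{d(x,y),d(y,x)\}$. The space $(X,d)$ is bicomplete if $d$ is $T_0$ and the metric $d^s$ is complete. For $x\in X$ and nonempty $A\subseteq X$: $d(x,A)=\inf_{a\in A}d(x,a)$, $d(A,x)=\inf_{a\in A}d(a,x)$. For nonempty $A,B\subseteq X$: $H(A,B)=\max\{\sup_{a\in A}d(a,B),\ \sup_{b\in B}d(A,b)\}$. $CB(X)$ denotes the family of nonempty $d^s$-bounded, $\tau(d^s)$-closed subsets of $X$; continuity of $J$ is with respect to $\tau(d^s)$. For $J:X\to X$ and $F:X\to 2^X$, a point $x$ is a startpoint of $J$ and $F$ if $H(\{Jx\},Fx)=0$ and an endpoint of $J$ and $F$ if $H(Fx,\{Jx\})=0$. $J$ and $F$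 have the approximate mix-point property if $\inf_{x\in X}\sup_{y\in Fx}d^s(Jx,y)=0$. *)

theory Defs
  imports "HOL-Analysis.Analysis"
begin

definition quasi_pseudometric :: "('a \<Rightarrow> 'a \<Rightarrow> real) \<Rightarrow> bool" where
  "quasi_pseudometric d \<longleftrightarrow> (\<forall>x y. d x y \<ge> 0) \<and> (\<forall>x. d x x = 0) \<and>
     (\<forall>x y z. d x z \<le> d x y + d y z)"

definition T0_qpm :: "('a \<Rightarrow> 'a \<Rightarrow> real) \<Rightarrow> bool" where
  "T0_qpm d \<longleftrightarrow> (\<forall>x y. d x y = 0 \<and> d y x = 0 \<longrightarrow> x = y)"

definition sym_dist :: "('a \<Rightarrow> 'a \<Rightarrow> real) \<Rightarrow> 'a \<Rightarrow> 'a \<Rightarrow> real" where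
  "sym_dist d x y = max (d x y) (d y x)"

definition ds_complete :: "('a \<Rightarrow> 'a \<Rightarrow> real) \<Rightarrow> bool" where
  "ds_complete d \<longleftrightarrow> (\<forall>s :: nat \<Rightarrow> 'a.
     (\<forall>e>0. \<exists>N. \<forall>m\<ge>N. \<forall>n\<ge>N. sym_dist d (s m) (s n) < e) \<longrightarrow>
     (\<exists>l. \<forall>e>0. \<exists>N. \<forall>n\<ge>N. sym_dist d (s n) l < e))"

definition bicomplete :: "('a \<Rightarrow> 'a \<Rightarrow> real) \<Rightarrow> bool" where
  "bicomplete d \<longleftrightarrow> T0_qpm d \<and> ds_complete d"

definition ds_closed :: "('a \<Rightarrow> 'a \<Rightarrow> real) \<Rightarrow> 'a set \<Rightarrow> bool" where
  "ds_closed d A \<longleftrightarrow> (\<forall>x. (\<forall>e>0. \<exists>a\<in>A. sym_dist d x a < e) \<longrightarrow> x \<in> A)"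

definition ds_bounded :: "('a \<Rightarrow> 'a \<Rightarrow> real) \<Rightarrow> 'a set \<Rightarrow> bool" where
  "ds_bounded d A \<longleftrightarrow> (\<exists>M. \<forall>a\<in>A. \<forall>b\<in>A. sym_dist d a b \<le> M)"

definition CB :: "('a \<Rightarrow> 'a \<Rightarrow> real) \<Rightarrow> 'a set set" where
  "CB d = {A. A \<noteq> {} \<and> ds_bounded d A \<and> ds_closed d A}"

definition ds_continuous :: "('a \<Rightarrow> 'a \<Rightarrow> real) \<Rightarrow> ('a \<Rightarrow> 'a) \<Rightarrow> bool" where
  "ds_continuous d J \<longleftrightarrow> (\<forall>x. \<forall>e>0. \<exists>\<delta>>0. \<forall>y. sym_dist d x y < \<delta> \<longrightarrow> sym_dist d (J x) (J y) < e)"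

definition pt_set_dist :: "('a \<Rightarrow> 'a \<Rightarrow> real) \<Rightarrow> 'a \<Rightarrow> 'a set \<Rightarrow> real" where
  "pt_set_dist d x A = (INF a\<in>A. d x a)"

definition set_pt_dist :: "('a \<Rightarrow> 'a \<Rightarrow> real) \<Rightarrow> 'a set \<Rightarrow> 'a \<Rightarrow> real" where
  "set_pt_dist d A x = (INF a\<in>A. d a x)"

definition hausdorff_qpm :: "('a \<Rightarrow> 'a \<Rightarrow> real) \<Rightarrow> 'a set \<Rightarrow> 'a set \<Rightarrow> real" where
  "hausdorff_qpm d A B = max (SUP a\<in>A. pt_set_dist d a B) (SUP b\<in>B. set_pt_dist d A b)"

definition startpoint :: "('a \<Rightarrow> 'a \<Rightarrow> real) \<Rightarrow> ('a \<Rightarrow> 'a) \<Rightarrow> ('a \<Rightarrow> 'a set) \<Rightarrow> 'a \<Rightarrow> bool" where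
  "startpoint d J F x \<longleftrightarrow> hausdorff_qpm d {J x} (F x) = 0"

definition endpoint :: "('a \<Rightarrow> 'a \<Rightarrow> real) \<Rightarrow> ('a \<Rightarrow> 'a) \<Rightarrow> ('a \<Rightarrow> 'a set) \<Rightarrow> 'a \<Rightarrow> bool" where
  "endpoint d J F x \<longleftrightarrow> hausdorff_qpm d (F x) {J x} = 0"

definition approx_mix_point :: "('a \<Rightarrow> 'a \<Rightarrow> real) \<Rightarrow> ('a \<Rightarrow> 'a) \<Rightarrow> ('a \<Rightarrow> 'a set) \<Rightarrow> bool" where
  "approx_mix_point d J F \<longleftrightarrow> (INF x. SUP y\<in>F x. sym_dist d (J x) y) = 0"

end

theory Submission
  imports Defs
begin

text \<open>
  Measure how far \<open>x\<close> is from being a mix point by the defect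
  \<open>\<delta>(x) = sup {d\<^sup>s(Jx, y) | y \<in> Fx}\<close>.  The contraction condition with \<open>\<alpha> < 1/2\<close> yields
  \<open>(1 - 2\<alpha>) d(Jx, Jy) \<le> (1 + \<alpha>)(\<delta>(x) + \<delta>(y))\<close>.  Together with \<open>r d \<le> d \<circ> J\<close> this
  gives uniqueness (two points with \<open>Fx = {Jx}\<close> have defect \<open>0\<close>) and shows that a
  sequence with defects tending to \<open>0\<close> is \<open>d\<^sup>s\<close>-Cauchy.  At its limit \<open>u\<close>, continuity
  of \<open>J\<close> and the contraction condition force every \<open>b \<in> Fu\<close> to satisfy
  \<open>d(Ju, b) = d(b, Ju) = 0\<close>, i.e. \<open>Fu = {Ju}\<close>, which is exactly being both a startpoint
  and an endpoint.
\<close>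

lemma qpm_nonneg: "quasi_pseudometric d \<Longrightarrow> 0 \<le> d x y"
  and qpm_refl: "quasi_pseudometric d \<Longrightarrow> d x x = 0"
  and qpm_triangle: "quasi_pseudometric d \<Longrightarrow> d x z \<le> d x y + d y z"
  by (simp_all add: quasi_pseudometric_def)

lemma T0_qpm_eqI:
  assumes "T0_qpm d" "quasi_pseudometric d" "d x y \<le> 0" "d y x \<le> 0"
  shows "x = y"
  using assms qpm_nonneg[OF assms(2), of x y] qpm_nonneg[OF assms(2), of y x]
  unfolding T0_qpm_def by force

lemma sym_dist_ge: "d x y \<le> sym_dist d x y" "d y x \<le> sym_dist d x y"
  by (simp_all add: sym_dist_def)

lemma sym_dist_commute: "sym_dist d x y = sym_dist d y x"
  by (simp add: sym_dist_def max.commute)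

lemma sym_dist_nonneg: "quasi_pseudometric d \<Longrightarrow> 0 \<le> sym_dist d x y"
  unfolding quasi_pseudometric_def sym_dist_def by (simp add: le_max_iff_disj)

lemma sym_dist_triangle:
  "quasi_pseudometric d \<Longrightarrow> sym_dist d x z \<le> sym_dist d x y + sym_dist d y z"
  unfolding sym_dist_def using qpm_triangle[of d x z y] qpm_triangle[of d z x y] by auto

lemma sym_dist_refl: "quasi_pseudometric d \<Longrightarrow> sym_dist d x x = 0"
  by (simp add: sym_dist_def qpm_refl)

definition conj_dist :: "('a \<Rightarrow> 'a \<Rightarrow> real) \<Rightarrow> 'a \<Rightarrow> 'a \<Rightarrow> real"
  where "conj_dist d x y = d y x"

lemma quasi_pseudometric_conj_dist:
  assumes "quasi_pseudometric d" shows "quasi_pseudometric (conj_dist d)"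
proof -
  have "d z x \<le> d y x + d z y" for x y z
    using qpm_triangle[OF assms, of z x y] by linarith
  then show ?thesis
    using assms unfolding quasi_pseudometric_def conj_dist_def by auto
qed

lemma sym_dist_conj_dist: "sym_dist (conj_dist d) = sym_dist d"
  by (simp add: fun_eq_iff sym_dist_def conj_dist_def max.commute)

lemma ds_bounded_conj_dist: "ds_bounded (conj_dist d) = ds_bounded d"
  by (simp add: fun_eq_iff ds_bounded_def sym_dist_conj_dist)

lemma pt_set_dist_conj_dist: "pt_set_dist (conj_dist d) x A = set_pt_dist d A x"
  and set_pt_dist_conj_dist: "set_pt_dist (conj_dist d) A x = pt_set_dist d x A"
  by (simp_all add: pt_set_dist_def set_pt_dist_def conj_dist_def)

lemma hausdorff_qpm_conj_dist: "hausdorff_qpm (conj_dist d) A B = hausdorff_qpm d B A"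
  by (simp add: hausdorff_qpm_def pt_set_dist_conj_dist set_pt_dist_conj_dist max.commute)

lemma pt_set_dist_le: "quasi_pseudometric d \<Longrightarrow> a \<in> A \<Longrightarrow> pt_set_dist d x A \<le> d x a"
  unfolding pt_set_dist_def by (rule cINF_lower) (auto intro!: bdd_belowI[of _ 0] simp: qpm_nonneg)

lemma set_pt_dist_le:
  assumes "quasi_pseudometric d" "a \<in> A" shows "set_pt_dist d A x \<le> d a x"
  using pt_set_dist_le[OF quasi_pseudometric_conj_dist[OF assms(1)] assms(2), of x]
  by (simp add: pt_set_dist_conj_dist conj_dist_def)

lemma pt_set_dist_greatest:
  "A \<noteq> {} \<Longrightarrow> (\<And>a. a \<in> A \<Longrightarrow> c \<le> d x a) \<Longrightarrow> c \<le> pt_set_dist d x A"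
  unfolding pt_set_dist_def by (rule cINF_greatest)

lemma set_pt_dist_greatest:
  "A \<noteq> {} \<Longrightarrow> (\<And>a. a \<in> A \<Longrightarrow> c \<le> d a x) \<Longrightarrow> c \<le> set_pt_dist d A x"
  unfolding set_pt_dist_def by (rule cINF_greatest)

lemma pt_set_dist_triangle:
  assumes "quasi_pseudometric d" "A \<noteq> {}"
  shows "pt_set_dist d x A \<le> d x y + pt_set_dist d y A"
proof -
  have "pt_set_dist d x A - d x y \<le> pt_set_dist d y A"
  proof (rule pt_set_dist_greatest[OF assms(2)])
    fix a assume "a \<in> A"
    then show "pt_set_dist d x A - d x y \<le> d y a"
      using pt_set_dist_le[OF assms(1) \<open>a \<in> A\<close>, of x] qpm_triangle[OF assms(1), of x a y]
      by linarith
  qed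
  then show ?thesis by linarith
qed

lemma set_pt_dist_triangle:
  assumes "quasi_pseudometric d" "A \<noteq> {}"
  shows "set_pt_dist d A x \<le> set_pt_dist d A y + d y x"
  using pt_set_dist_triangle[OF quasi_pseudometric_conj_dist[OF assms(1)] assms(2), of x y]
  by (simp add: pt_set_dist_conj_dist conj_dist_def add.commute)

lemma pt_set_dist_le_hausdorff:
  assumes Q: "quasi_pseudometric d" and A: "ds_bounded d A" and B: "B \<noteq> {}" and a: "a \<in> A"
  shows "pt_set_dist d a B \<le> hausdorff_qpm d A B"
proof -
  obtain M where M: "\<And>x y. x \<in> A \<Longrightarrow> y \<in> A \<Longrightarrow> sym_dist d x y \<le> M"
    using A by (auto simp: ds_bounded_def)
  obtain b where b: "b \<in> B" using B by auto
  have "pt_set_dist d x B \<le> M + d a b" if "x \<in> A" for x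
  proof -
    have "pt_set_dist d x B \<le> d x a + d a b"
      using pt_set_dist_le[OF Q b, of x] qpm_triangle[OF Q, of x b a] by linarith
    also have "\<dots> \<le> M + d a b" using M[OF that a] sym_dist_ge(1)[of d x a] by linarith
    finally show ?thesis .
  qed
  then have "bdd_above ((\<lambda>x. pt_set_dist d x B) ` A)" by (rule bdd_aboveI2)
  then have "pt_set_dist d a B \<le> (SUP x\<in>A. pt_set_dist d x B)" by (rule cSUP_upper[OF a])
  then show ?thesis unfolding hausdorff_qpm_def by linarith
qed

lemma set_pt_dist_le_hausdorff:
  assumes "quasi_pseudometric d" "ds_bounded d B" "A \<noteq> {}" "b \<in> B"
  shows "set_pt_dist d A b \<le> hausdorff_qpm d A B"
  using pt_set_dist_le_hausdorff[OF quasi_pseudometric_conj_dist[OF assms(1)], of B A b] assms(2-)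
  by (simp add: ds_bounded_conj_dist pt_set_dist_conj_dist hausdorff_qpm_conj_dist)

lemma sym_dist_le_SUP:
  assumes Q: "quasi_pseudometric d" and B: "ds_bounded d B" and y: "y \<in> B"
  shows "sym_dist d x y \<le> (SUP z\<in>B. sym_dist d x z)"
proof -
  obtain M where M: "\<And>z w. z \<in> B \<Longrightarrow> w \<in> B \<Longrightarrow> sym_dist d z w \<le> M"
    using B by (auto simp: ds_bounded_def)
  have "sym_dist d x z \<le> sym_dist d x y + M" if "z \<in> B" for z
    using sym_dist_triangle[OF Q, of x z y] M[OF y that] by linarith
  then have "bdd_above ((\<lambda>z. sym_dist d x z) ` B)" by (rule bdd_aboveI2)
  then show ?thesis by (rule cSUP_upper[OF y])
qed

lemma startpoint_endpoint_iff:
  assumes Q: "quasi_pseudometric d" and T: "T0_qpm d"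
    and ne: "F x \<noteq> {}" and bd: "ds_bounded d (F x)"
  shows "startpoint d J F x \<and> endpoint d J F x \<longleftrightarrow> F x = {J x}"
proof
  assume H: "startpoint d J F x \<and> endpoint d J F x"
  have "b = J x" if b: "b \<in> F x" for b
  proof (rule T0_qpm_eqI[OF T Q])
    show "d b (J x) \<le> 0"
      using pt_set_dist_le_hausdorff[OF Q bd _ b, of "{J x}"] H
      by (simp add: endpoint_def pt_set_dist_def)
    show "d (J x) b \<le> 0"
      using set_pt_dist_le_hausdorff[OF Q bd _ b, of "{J x}"] H
      by (simp add: startpoint_def set_pt_dist_def)
  qed
  then show "F x = {J x}" using ne by auto
next
  assume "F x = {J x}"
  then show "startpoint d J F x \<and> endpoint d J F x"
    by (simp add: startpoint_def endpoint_def hausdorff_qpm_def pt_set_dist_def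
        set_pt_dist_def qpm_refl[OF Q])
qed

lemma nonneg_LIMSEQ_0_iff:
  fixes f :: "nat \<Rightarrow> real"
  assumes "\<And>n. 0 \<le> f n"
  shows "f \<longlonglongrightarrow> 0 \<longleftrightarrow> (\<forall>e>0. \<exists>N. \<forall>n\<ge>N. f n < e)"
  using assms by (simp add: LIMSEQ_iff)

lemma INF_eq_0_imp_null_sequence:
  fixes f :: "'a \<Rightarrow> real"
  assumes "bdd_below (range f)" and "(INF x. f x) = 0"
  obtains xs where "(\<lambda>n. f (xs n)) \<longlonglongrightarrow> 0"
proof -
  have "0 \<in> closure (range f)"
    using closure_contains_Inf[OF _ assms(1)] assms(2) by simp
  then obtain ys where ys: "\<forall>n. ys n \<in> range f" "ys \<longlonglongrightarrow> 0"
    unfolding closure_sequential by blast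
  have "\<forall>n. \<exists>x. ys n = f x" using ys(1) by blast
  then obtain xs where "\<forall>n. ys n = f (xs n)" by metis
  then have "ys = (\<lambda>n. f (xs n))" by auto
  then show ?thesis using that ys(2) by blast
qed

lemma Cauchy_condition_if_dominated:
  fixes \<rho> :: "'a \<Rightarrow> 'a \<Rightarrow> real"
  assumes "\<And>m n. \<rho> (s m) (s n) \<le> a m + a n" and "a \<longlonglongrightarrow> 0"
  shows "\<forall>e>0. \<exists>N. \<forall>m\<ge>N. \<forall>n\<ge>N. \<rho> (s m) (s n) < e"
proof (intro allI impI)
  fix e :: real assume "e > 0"
  then obtain N where N: "\<And>n. n \<ge> N \<Longrightarrow> \<bar>a n\<bar> < e / 2"
    using LIMSEQ_D[OF assms(2), of "e / 2"] by auto
  have "\<rho> (s m) (s n) < e" if "m \<ge> N" "n \<ge> N" for m n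
    using assms(1)[of m n] N[OF that(1)] N[OF that(2)] by linarith
  then show "\<exists>N. \<forall>m\<ge>N. \<forall>n\<ge>N. \<rho> (s m) (s n) < e" by blast
qed

lemma ds_complete_LIMSEQ:
  assumes "ds_complete d" "quasi_pseudometric d"
    and "\<forall>e>0. \<exists>N. \<forall>m\<ge>N. \<forall>n\<ge>N. sym_dist d (s m) (s n) < e"
  obtains l where "(\<lambda>n. sym_dist d l (s n)) \<longlonglongrightarrow> 0"
proof -
  obtain l where "\<forall>e>0. \<exists>N. \<forall>n\<ge>N. sym_dist d (s n) l < e"
    using assms(1,3) unfolding ds_complete_def by blast
  then have "(\<lambda>n. sym_dist d l (s n)) \<longlonglongrightarrow> 0"
    using nonneg_LIMSEQ_0_iff[of "\<lambda>n. sym_dist d l (s n)"] sym_dist_nonneg[OF assms(2)]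
    by (simp add: sym_dist_commute)
  then show ?thesis by (rule that)
qed

lemma ds_continuous_LIMSEQ:
  assumes "ds_continuous d J" "quasi_pseudometric d" "(\<lambda>n. sym_dist d l (s n)) \<longlonglongrightarrow> 0"
  shows "(\<lambda>n. sym_dist d (J l) (J (s n))) \<longlonglongrightarrow> 0"
proof -
  have conv: "\<forall>e>0. \<exists>N. \<forall>n\<ge>N. sym_dist d l (s n) < e"
    using assms(3) nonneg_LIMSEQ_0_iff[of "\<lambda>n. sym_dist d l (s n)"] sym_dist_nonneg[OF assms(2)]
    by blast
  have "\<exists>N. \<forall>n\<ge>N. sym_dist d (J l) (J (s n)) < e" if "e > 0" for e
  proof -
    obtain \<delta> where "\<delta> > 0" and \<delta>: "\<And>y. sym_dist d l y < \<delta> \<Longrightarrow> sym_dist d (J l) (J y) < e"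
      using assms(1) \<open>e > 0\<close> unfolding ds_continuous_def by blast
    then show ?thesis using conv by blast
  qed
  then show ?thesis
    using nonneg_LIMSEQ_0_iff[of "\<lambda>n. sym_dist d (J l) (J (s n))"] sym_dist_nonneg[OF assms(2)]
    by blast
qed

definition mix_defect :: "('a \<Rightarrow> 'a \<Rightarrow> real) \<Rightarrow> ('a \<Rightarrow> 'a) \<Rightarrow> ('a \<Rightarrow> 'a set) \<Rightarrow> 'a \<Rightarrow> real"
  where "mix_defect d J F x = (SUP y\<in>F x. sym_dist d (J x) y)"

lemma approx_mix_point_iff_mix_defect:
  "approx_mix_point d J F \<longleftrightarrow> (INF x. mix_defect d J F x) = 0"
  by (simp add: approx_mix_point_def mix_defect_def)

lemma mix_defect_conj_dist: "mix_defect (conj_dist d) J F = mix_defect d J F"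
  by (simp add: fun_eq_iff mix_defect_def sym_dist_conj_dist)

locale hausdorff_contraction =
  fixes d :: "'a \<Rightarrow> 'a \<Rightarrow> real" and J :: "'a \<Rightarrow> 'a" and F :: "'a \<Rightarrow> 'a set" and \<alpha> :: real
  assumes qpm: "quasi_pseudometric d"
    and values_nonempty: "F x \<noteq> {}"
    and values_bounded: "ds_bounded d (F x)"
    and contraction: "hausdorff_qpm d (F x) (F y)
                        \<le> \<alpha> * (pt_set_dist d (J x) (F y) + set_pt_dist d (F x) (J y))"
    and alpha_nonneg: "0 \<le> \<alpha>" and alpha_less_half: "\<alpha> < 1/2"
begin

abbreviation defect :: "'a \<Rightarrow> real" where "defect \<equiv> mix_defect d J F"

text \<open>The hypotheses are symmetric under \<open>d \<mapsto> d\<^sup>-\<^sup>1\<close>, so every one-sided estimate below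
  comes with its mirror image for free.\<close>
lemma hausdorff_contraction_conj_dist: "hausdorff_contraction (conj_dist d) J F \<alpha>"
  using qpm values_nonempty values_bounded alpha_nonneg alpha_less_half contraction
  by unfold_locales
    (simp_all add: quasi_pseudometric_conj_dist ds_bounded_conj_dist hausdorff_qpm_conj_dist
      pt_set_dist_conj_dist set_pt_dist_conj_dist conj_dist_def add.commute)

lemma dist_le_defect:
  assumes "y \<in> F x"
  shows "d (J x) y \<le> defect x" "d y (J x) \<le> defect x"
  using sym_dist_le_SUP[OF qpm values_bounded assms, of "J x"]
    sym_dist_ge[where d=d and x="J x" and y=y]
  unfolding mix_defect_def by linarith+

lemma defect_nonneg: "0 \<le> defect x"
  using values_nonempty dist_le_defect(1) qpm_nonneg[OF qpm] by (meson ex_in_conv order_trans)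

lemma defect_eq_0: "F x = {J x} \<Longrightarrow> defect x = 0"
  by (simp add: mix_defect_def sym_dist_refl[OF qpm])

lemma bdd_below_defect: "bdd_below (range defect)"
  using defect_nonneg by (intro bdd_belowI2)

lemma INF_defect_eq_0:
  assumes "F x = {J x}" shows "(INF x. defect x) = 0"
proof (rule antisym)
  show "(INF x. defect x) \<le> 0"
    using cINF_lower[OF bdd_below_defect UNIV_I, of x] defect_eq_0[OF assms] by simp
  show "0 \<le> (INF x. defect x)" by (rule cINF_greatest) (simp_all add: defect_nonneg)
qed

lemma dist_J_le_defect: "(1 - 2 * \<alpha>) * d (J x) (J y) \<le> (1 + \<alpha>) * (defect x + defect y)"
proof -
  obtain a where a: "a \<in> F x" using values_nonempty by blast
  obtain b where b: "b \<in> F y" using values_nonempty by blast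
  have "d (J x) (J y) - defect x - defect y \<le> pt_set_dist d a (F y)"
  proof (rule pt_set_dist_greatest[OF values_nonempty])
    fix c assume c: "c \<in> F y"
    show "d (J x) (J y) - defect x - defect y \<le> d a c"
      using qpm_triangle[OF qpm, of "J x" "J y" a] qpm_triangle[OF qpm, of a "J y" c]
        dist_le_defect(1)[OF a] dist_le_defect(2)[OF c] by linarith
  qed
  also have "\<dots> \<le> hausdorff_qpm d (F x) (F y)"
    by (rule pt_set_dist_le_hausdorff[OF qpm values_bounded values_nonempty a])
  also have "\<dots> \<le> \<alpha> * (pt_set_dist d (J x) (F y) + set_pt_dist d (F x) (J y))"
    by (rule contraction)
  also have "\<dots> \<le> \<alpha> * ((d (J x) (J y) + defect y) + (defect x + d (J x) (J y)))"
    using pt_set_dist_triangle[OF qpm values_nonempty[of y], of "J x" "J y"]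
      set_pt_dist_triangle[OF qpm values_nonempty[of x], of "J y" "J x"]
      pt_set_dist_le[OF qpm b, of "J y"] set_pt_dist_le[OF qpm a, of "J x"]
      dist_le_defect(1)[OF b] dist_le_defect(2)[OF a] alpha_nonneg
    by (intro mult_left_mono) linarith+
  finally show ?thesis by (simp add: algebra_simps)
qed

lemma sym_dist_J_le_defect:
  "(1 - 2 * \<alpha>) * sym_dist d (J x) (J y) \<le> (1 + \<alpha>) * (defect x + defect y)"
  using dist_J_le_defect[of x y] dist_J_le_defect[of y x]
  by (simp add: sym_dist_def add.commute)

lemma dist_J_value_le:
  assumes b: "b \<in> F u"
  shows "(1 - \<alpha>) * d (J u) b \<le> (1 + 2 * \<alpha>) * sym_dist d (J u) (J x) + (1 + \<alpha>) * defect x"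
proof -
  let ?s = "sym_dist d (J u) (J x)"
  obtain c where c: "c \<in> F x" using values_nonempty by blast
  have s: "d (J u) (J x) \<le> ?s" "d (J x) (J u) \<le> ?s" by (rule sym_dist_ge)+
  have "d (J u) b - ?s - defect x \<le> set_pt_dist d (F x) b"
  proof (rule set_pt_dist_greatest[OF values_nonempty])
    fix a assume a: "a \<in> F x"
    show "d (J u) b - ?s - defect x \<le> d a b"
      using qpm_triangle[OF qpm, of "J u" b "J x"] qpm_triangle[OF qpm, of "J x" b a]
        dist_le_defect(1)[OF a] s by linarith
  qed
  also have "\<dots> \<le> hausdorff_qpm d (F x) (F u)"
    by (rule set_pt_dist_le_hausdorff[OF qpm values_bounded values_nonempty b])
  also have "\<dots> \<le> \<alpha> * (pt_set_dist d (J x) (F u) + set_pt_dist d (F x) (J u))"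
    by (rule contraction)
  also have "\<dots> \<le> \<alpha> * ((?s + d (J u) b) + (defect x + ?s))"
    using pt_set_dist_triangle[OF qpm values_nonempty[of u], of "J x" "J u"]
      set_pt_dist_triangle[OF qpm values_nonempty[of x], of "J u" "J x"]
      pt_set_dist_le[OF qpm b, of "J u"] set_pt_dist_le[OF qpm c, of "J x"]
      dist_le_defect(2)[OF c] s alpha_nonneg
    by (intro mult_left_mono) linarith+
  finally show ?thesis by (simp add: algebra_simps)
qed

lemma dist_value_J_le:
  assumes "b \<in> F u"
  shows "(1 - \<alpha>) * d b (J u) \<le> (1 + 2 * \<alpha>) * sym_dist d (J u) (J x) + (1 + \<alpha>) * defect x"
proof -
  interpret conj: hausdorff_contraction "conj_dist d" J F \<alpha>
    by (rule hausdorff_contraction_conj_dist)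
  show ?thesis
    using conj.dist_J_value_le[OF assms, of x]
    by (simp add: sym_dist_conj_dist mix_defect_conj_dist conj_dist_def)
qed

lemma eq_singleton_at_limit:
  assumes T: "T0_qpm d"
    and defects: "(\<lambda>n. defect (xs n)) \<longlonglongrightarrow> 0"
    and images: "(\<lambda>n. sym_dist d (J u) (J (xs n))) \<longlonglongrightarrow> 0"
  shows "F u = {J u}"
proof -
  let ?R = "\<lambda>n. (1 + 2 * \<alpha>) * sym_dist d (J u) (J (xs n)) + (1 + \<alpha>) * defect (xs n)"
  have R: "?R \<longlonglongrightarrow> 0"
    using tendsto_add[OF tendsto_mult_right_zero[OF images] tendsto_mult_right_zero[OF defects]]
    by simp
  have "b = J u" if b: "b \<in> F u" for b
  proof (rule T0_qpm_eqI[OF T qpm])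
    have "(1 - \<alpha>) * d b (J u) \<le> 0" "(1 - \<alpha>) * d (J u) b \<le> 0"
      using LIMSEQ_le_const[OF R] dist_value_J_le[OF b] dist_J_value_le[OF b] by blast+
    then show "d b (J u) \<le> 0" "d (J u) b \<le> 0"
      using alpha_less_half by (simp_all add: mult_le_0_iff)
  qed
  then show ?thesis using values_nonempty[of u] by auto
qed

context
  fixes r :: real
  assumes r_pos: "r > 0" and expanding: "\<And>x y. r * d x y \<le> d (J x) (J y)"
begin

lemma sym_dist_le_defect:
  "r * (1 - 2 * \<alpha>) * sym_dist d x y \<le> (1 + \<alpha>) * (defect x + defect y)"
proof -
  have "r * sym_dist d x y = max (r * d x y) (r * d y x)"
    using r_pos by (simp add: sym_dist_def max_mult_distrib_left)
  also have "\<dots> \<le> sym_dist d (J x) (J y)"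
    unfolding sym_dist_def by (rule max.mono[OF expanding expanding])
  finally have "(1 - 2 * \<alpha>) * (r * sym_dist d x y) \<le> (1 - 2 * \<alpha>) * sym_dist d (J x) (J y)"
    using alpha_less_half by (intro mult_left_mono) auto
  also have "\<dots> \<le> (1 + \<alpha>) * (defect x + defect y)" by (rule sym_dist_J_le_defect)
  finally show ?thesis by (simp add: mult_ac)
qed

lemma singleton_point_unique:
  assumes T: "T0_qpm d" and "F x = {J x}" "F y = {J y}"
  shows "x = y"
proof (rule T0_qpm_eqI[OF T qpm])
  have "r * (1 - 2 * \<alpha>) * sym_dist d x y \<le> 0"
    using sym_dist_le_defect[of x y] by (simp add: defect_eq_0 assms(2,3))
  then have "sym_dist d x y \<le> 0"
    using r_pos alpha_less_half by (simp add: mult_le_0_iff)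
  then show "d x y \<le> 0" "d y x \<le> 0" using sym_dist_ge[where d=d and x=x and y=y] by linarith+
qed

lemma singleton_point_exists:
  assumes "bicomplete d" "ds_continuous d J" and "(INF x. defect x) = 0"
  obtains u where "F u = {J u}"
proof -
  have T: "T0_qpm d" and C: "ds_complete d" using assms(1) by (auto simp: bicomplete_def)
  obtain xs where defects: "(\<lambda>n. defect (xs n)) \<longlonglongrightarrow> 0"
    using INF_eq_0_imp_null_sequence[OF bdd_below_defect assms(3)] by blast
  define c where "c = (1 + \<alpha>) / (r * (1 - 2 * \<alpha>))"
  have "sym_dist d (xs m) (xs n) \<le> c * defect (xs m) + c * defect (xs n)" for m n
  proof -
    have "r * (1 - 2 * \<alpha>) > 0" using r_pos alpha_less_half by simp
    then have "sym_dist d (xs m) (xs n)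
                 \<le> (1 + \<alpha>) * (defect (xs m) + defect (xs n)) / (r * (1 - 2 * \<alpha>))"
      using sym_dist_le_defect[of "xs m" "xs n"] by (simp add: pos_le_divide_eq mult_ac)
    then have "sym_dist d (xs m) (xs n) \<le> c * (defect (xs m) + defect (xs n))"
      by (simp add: c_def)
    then show ?thesis by (simp add: distrib_left)
  qed
  then have "\<forall>e>0. \<exists>N. \<forall>m\<ge>N. \<forall>n\<ge>N. sym_dist d (xs m) (xs n) < e"
    by (rule Cauchy_condition_if_dominated) (intro tendsto_mult_right_zero defects)
  then obtain u where "(\<lambda>n. sym_dist d u (xs n)) \<longlonglongrightarrow> 0"
    using ds_complete_LIMSEQ[OF C qpm] by blast
  then have "(\<lambda>n. sym_dist d (J u) (J (xs n))) \<longlonglongrightarrow> 0"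
    by (rule ds_continuous_LIMSEQ[OF assms(2) qpm])
  then show ?thesis using eq_singleton_at_limit[OF T defects] that by blast
qed

end

end

theorem mainTheorem8:
  fixes d :: "'a \<Rightarrow> 'a \<Rightarrow> real" and J :: "'a \<Rightarrow> 'a" and F :: "'a \<Rightarrow> 'a set"
    and r \<alpha> :: real
  assumes "quasi_pseudometric d" and "bicomplete d"
    and "ds_continuous d J"
    and "r > 0" and "\<And>x y. r * d x y \<le> d (J x) (J y)"
    and "\<And>x. F x \<in> CB d"
    and "\<And>x y. hausdorff_qpm d (F x) (F y)
                 \<le> \<alpha> * (pt_set_dist d (J x) (F y) + set_pt_dist d (F x) (J y))"
    and "0 < \<alpha>" and "\<alpha> < 1/2" and "2 * r * \<alpha> < 1"
  shows "(\<exists>!x0. startpoint d J F x0 \<and> endpoint d J F x0) \<longleftrightarrow> approx_mix_point d J F"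
proof -
  interpret hausdorff_contraction d J F \<alpha>
    using assms(1,6-9) by unfold_locales (auto simp: CB_def)
  have T: "T0_qpm d" using assms(2) by (simp add: bicomplete_def)
  have mix_iff: "startpoint d J F x \<and> endpoint d J F x \<longleftrightarrow> F x = {J x}" for x
    using startpoint_endpoint_iff[OF qpm T values_nonempty values_bounded] .
  have unique: "F x = {J x} \<Longrightarrow> F y = {J y} \<Longrightarrow> x = y" for x y
    using singleton_point_unique[OF assms(4,5) T] .
  show ?thesis
    unfolding mix_iff approx_mix_point_iff_mix_defect
  proof
    assume "\<exists>!x. F x = {J x}"
    then show "(INF x. defect x) = 0" using INF_defect_eq_0 by blast
  next
    assume "(INF x. defect x) = 0"
    then obtain u where "F u = {J u}"
      using singleton_point_exists[OF assms(4,5,2,3)] by blast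
    then show "\<exists>!x. F x = {J x}" using unique by blast
  qed
qed

end
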